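(* Let $(G,R,\omega)$ be a metric RPP instance and $S$ an edge-minimizing Eulerian extension for it. Then $S$ contains no edge $\{u,v\}$ such that $u$ and $v$ belong to the same connected component of $G\langle R\rangle$ and $u$ is balanced in $G\langle R\rangle$.
   Context: An RPP instance is a triple $(G,R,\omega)$, where $G=(V,E)$ is an undirected multigraph, $\omega\colon E\to\mathbb{N}$ assigns weights (parallel edges have equal weight), and $R$ is a nonempty multiset of edges of $G$. The instance is metric if $G$ contains an edge between any two vertices and the weights satisfy the triangle inequality $\omega(\{u,w\})\le\omega(\{u,v\})+\omega(\{v,w\})$ for all $u,v,w\in V$. For a multiset $X$ of edges: - $\omega(X)$ and $|X|$ are the weight and cardinality counted with multiplicity; - $V(X)$ is the set of vertices incident to edges of $X$; - $G\langle X\rangle=(V(X),X)$ is the multigraph formed by $X$ (no isolated vertices); - $\uplus$ denotes multiset sum. A vertex is balanced in a multigraph if its degree is even (a loop counts 2), and imbalanced otherwise. A multigraph without isolated vertices is Eulerian if it is connected and all vertices are balanced. An Eulerian extension for $(G,R,\omega)$ is a multiset $S$ of edges of $G$ such that $G\langle R\uplus S\rangle$ is Eulerian. It is edge-minimizing if there is no Eulerian extension $S'$ with $|S'|<|S|$ and $\omega(S')\le\omega(S)$. *)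

theory Defs
  imports Main "HOL-Library.Multiset" "HOL-Library.Uprod"
begin

text \<open>Edges are unordered pairs of vertices (loops = Upair v v).
  Edge weights are a function of the endpoints, so parallel edges have equal weight.\<close>

definition edge_weight :: "('v uprod \<Rightarrow> nat) \<Rightarrow> 'v uprod multiset \<Rightarrow> nat" where
  "edge_weight \<omega> X = sum_mset (image_mset \<omega> X)"

definition verts :: "'v uprod multiset \<Rightarrow> 'v set" where
  "verts X = (\<Union>e\<in>set_mset X. set_uprod e)"

definition deg :: "'v uprod multiset \<Rightarrow> 'v \<Rightarrow> nat" where
  "deg X v = sum_mset (image_mset (\<lambda>e. if e = Upair v v then 2 else if v \<in> set_uprod e then 1 else 0) X)"

definition balanced :: "'v uprod multiset \<Rightarrow> 'v \<Rightarrow> bool" where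
  "balanced X v \<longleftrightarrow> even (deg X v)"

definition adj :: "'v uprod multiset \<Rightarrow> ('v \<times> 'v) set" where
  "adj X = {(u, v). Upair u v \<in># X}"

definition same_comp :: "'v uprod multiset \<Rightarrow> 'v \<Rightarrow> 'v \<Rightarrow> bool" where
  "same_comp X u v \<longleftrightarrow> u \<in> verts X \<and> v \<in> verts X \<and> (u, v) \<in> (adj X)\<^sup>*"

definition connected_mg :: "'v uprod multiset \<Rightarrow> bool" where
  "connected_mg X \<longleftrightarrow> (\<forall>u\<in>verts X. \<forall>v\<in>verts X. (u, v) \<in> (adj X)\<^sup>*)"

definition eulerian :: "'v uprod multiset \<Rightarrow> bool" where
  "eulerian X \<longleftrightarrow> connected_mg X \<and> (\<forall>v\<in>verts X. balanced X v)"

definition rpp_instance :: "'v set \<Rightarrow> 'v uprod multiset \<Rightarrow> 'v uprod multiset \<Rightarrow> bool" where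
  "rpp_instance V E R \<longleftrightarrow> finite V \<and> verts E \<subseteq> V \<and> R \<noteq> {#} \<and> set_mset R \<subseteq> set_mset E"

definition metric_instance :: "'v set \<Rightarrow> 'v uprod multiset \<Rightarrow> ('v uprod \<Rightarrow> nat) \<Rightarrow> bool" where
  "metric_instance V E \<omega> \<longleftrightarrow>
     (\<forall>u\<in>V. \<forall>v\<in>V. u \<noteq> v \<longrightarrow> Upair u v \<in># E) \<and>
     (\<forall>u\<in>V. \<forall>v\<in>V. \<forall>w\<in>V. u \<noteq> v \<and> v \<noteq> w \<and> u \<noteq> w \<longrightarrow>
        \<omega> (Upair u w) \<le> \<omega> (Upair u v) + \<omega> (Upair v w))"

definition eulerian_extension :: "'v uprod multiset \<Rightarrow> 'v uprod multiset \<Rightarrow> 'v uprod multiset \<Rightarrow> bool" where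
  "eulerian_extension E R S \<longleftrightarrow> set_mset S \<subseteq> set_mset E \<and> eulerian (R + S)"

definition edge_minimizing :: "'v uprod multiset \<Rightarrow> 'v uprod multiset \<Rightarrow> ('v uprod \<Rightarrow> nat) \<Rightarrow> 'v uprod multiset \<Rightarrow> bool" where
  "edge_minimizing E R \<omega> S \<longleftrightarrow> eulerian_extension E R S \<and>
     \<not> (\<exists>S'. eulerian_extension E R S' \<and> size S' < size S \<and> edge_weight \<omega> S' \<le> edge_weight \<omega> S)"

end

theory Submission
  imports Defs
begin

text \<open>Suppose S contains an edge {u,v} with u balanced in G<R> and u, v in the same component
  of G<R>. Since R + S is Eulerian, u has even degree in S, so S contains a second edge {u,w}.
  Replacing the path v, u, w by the single edge {v,w} (or dropping it entirely when v = w, or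
  dropping {u,u} when the first edge is a loop) keeps all parities, keeps the graph connected
  because u and v are still joined by R, does not increase the weight by the triangle inequality,
  and uses fewer edges. This contradicts edge-minimality.\<close>

lemma deg_union [simp]: "deg (A + B) x = deg A x + deg B x"
  by (simp add: deg_def)

lemma deg_add_mset [simp]:
  "deg (add_mset e M) x = (if e = Upair x x then 2 else if x \<in> set_uprod e then 1 else 0) + deg M x"
  by (simp add: deg_def)

lemma deg_empty [simp]: "deg {#} x = 0"
  by (simp add: deg_def)

lemma verts_union [simp]: "verts (A + B) = verts A \<union> verts B"
  by (auto simp: verts_def)

lemma Upair_in_verts:
  assumes "Upair a b \<in># X"
  shows "a \<in> verts X" "b \<in> verts X"
  using assms by (force simp: verts_def)+

lemma Upair_commute: "Upair a b = Upair b a"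
  by simp

lemma adj_sym: "(a, b) \<in> adj X \<Longrightarrow> (b, a) \<in> adj X"
  by (simp add: adj_def Upair_commute)

lemma rtrancl_adj_sym: "(a, b) \<in> (adj X)\<^sup>* \<Longrightarrow> (b, a) \<in> (adj X)\<^sup>*"
  by (induction rule: rtrancl_induct) (auto intro: adj_sym converse_rtrancl_into_rtrancl)

lemma rtrancl_adj_mono: "set_mset X \<subseteq> set_mset Y \<Longrightarrow> (adj X)\<^sup>* \<subseteq> (adj Y)\<^sup>*"
  by (rule rtrancl_mono) (auto simp: adj_def)

lemma odd_sum_mset_imp_odd:
  fixes f :: "'a \<Rightarrow> 'b :: semiring_parity"
  shows "odd (\<Sum>x\<in>#M. f x) \<Longrightarrow> \<exists>x\<in>#M. odd (f x)"
  by (induction M) auto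

lemma odd_deg_imp_edge:
  assumes "odd (deg X u)"
  shows "\<exists>w. w \<noteq> u \<and> Upair u w \<in># X"
proof -
  obtain e where "e \<in># X" "e \<noteq> Upair u u" "u \<in> set_uprod e"
    using odd_sum_mset_imp_odd[OF assms[unfolded deg_def]] by (auto split: if_splits)
  then show ?thesis
    by (cases e) (auto, metis Upair_commute)
qed

lemma eulerian_exchange:
  assumes eul: "eulerian X"
    and exch: "X' + A = X + B"
    and even: "\<forall>x. even (deg (A + B) x)"
    and verts_B: "verts B \<subseteq> verts X"
    and bridged: "\<forall>a b. Upair a b \<in># A \<longrightarrow> (a, b) \<in> (adj X')\<^sup>*"
  shows "eulerian X'"
proof -
  have count_exch: "count X' e + count A e = count X e + count B e" for e
    using arg_cong[OF exch, of "\<lambda>M. count M e"] by simp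
  have "e \<in># X + B" if "e \<in># X'" for e
    using that count_exch[of e] by (metis count_eq_zero_iff count_union add_is_0)
  then have verts_X': "verts X' \<subseteq> verts X"
    using verts_B by (auto simp: verts_def)
  have "adj X \<subseteq> (adj X')\<^sup>*"
  proof clarify
    fix a b assume "(a, b) \<in> adj X"
    then have "Upair a b \<in># X" by (simp add: adj_def)
    then have "Upair a b \<in># X' \<or> Upair a b \<in># A"
      using count_exch[of "Upair a b"] by (metis add_cancel_right_right count_eq_zero_iff not_add_less1 not_gr_zero)
    then show "(a, b) \<in> (adj X')\<^sup>*"
      using bridged by (auto simp: adj_def)
  qed
  then have "connected_mg X'"
    unfolding connected_mg_def
  proof (intro ballI)
    fix x y assume "x \<in> verts X'" "y \<in> verts X'"
    then have "(x, y) \<in> (adj X)\<^sup>*"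
      using eul verts_X' by (auto simp: eulerian_def connected_mg_def)
    then show "(x, y) \<in> (adj X')\<^sup>*"
      using rtrancl_subset_rtrancl[OF \<open>adj X \<subseteq> (adj X')\<^sup>*\<close>] by blast
  qed
  moreover have "balanced X' x" if "x \<in> verts X'" for x
  proof -
    have "even (deg X x)"
      using that eul verts_X' by (auto simp: eulerian_def balanced_def)
    moreover have "deg X' x + deg A x = deg X x + deg B x"
      using arg_cong[OF exch, of "\<lambda>M. deg M x"] by simp
    moreover have "even (deg A x + deg B x)"
      using even deg_union by metis
    ultimately show ?thesis
      unfolding balanced_def by presburger
  qed
  ultimately show ?thesis
    by (simp add: eulerian_def)
qed

lemma edge_minimizing_no_shorter_exchange:
  assumes min: "edge_minimizing E R \<omega> S"
    and "A \<subseteq># S"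
    and "set_mset B \<subseteq> set_mset E"
    and "size B < size A"
    and "edge_weight \<omega> B \<le> edge_weight \<omega> A"
    and "\<forall>x. even (deg (A + B) x)"
    and "verts B \<subseteq> verts (R + S)"
    and "\<forall>a b. Upair a b \<in># A \<longrightarrow> (a, b) \<in> (adj (R + (S - A + B)))\<^sup>*"
  shows False
proof -
  define S' where "S' = S - A + B"
  have exch: "S' + A = S + B"
    using \<open>A \<subseteq># S\<close> unfolding S'_def by (metis subset_mset.diff_add add.assoc add.commute)
  have "eulerian (R + S')"
  proof (rule eulerian_exchange)
    show "eulerian (R + S)"
      using min by (simp add: edge_minimizing_def eulerian_extension_def)
    show "R + S' + A = R + S + B"
      using exch by (simp add: add.assoc)
  qed (use assms(6-8) in \<open>simp_all add: S'_def\<close>)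
  moreover have "set_mset S' \<subseteq> set_mset E"
    using min assms(3) by (auto simp: S'_def edge_minimizing_def eulerian_extension_def dest: in_diffD)
  moreover have "size S' < size S"
    using arg_cong[OF exch, of size] assms(4) by simp
  moreover have "edge_weight \<omega> S' \<le> edge_weight \<omega> S"
    using arg_cong[OF exch, of "edge_weight \<omega>"] assms(5) by (simp add: edge_weight_def)
  ultimately show False
    using min by (auto simp: edge_minimizing_def eulerian_extension_def)
qed

lemma edge_minimizing_no_loop:
  assumes "edge_minimizing E R \<omega> S"
  shows "Upair u u \<notin># S"
proof
  assume "Upair u u \<in># S"
  then show False
    by (intro edge_minimizing_no_shorter_exchange[OF assms, of "{#Upair u u#}" "{#}"])
       (auto simp: verts_def edge_weight_def)
qed

lemma edge_minimizing_no_double_edge_in_component: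
  assumes min: "edge_minimizing E R \<omega> S"
    and path: "(u, v) \<in> (adj R)\<^sup>*"
  shows "\<not> {#Upair u v, Upair u v#} \<subseteq># S"
proof
  assume sub: "{#Upair u v, Upair u v#} \<subseteq># S"
  let ?S' = "S - {#Upair u v, Upair u v#} + {#}"
  have uv: "(u, v) \<in> (adj (R + ?S'))\<^sup>*"
    using path rtrancl_adj_mono[of R "R + ?S'"] by auto
  then have vu: "(v, u) \<in> (adj (R + ?S'))\<^sup>*"
    by (rule rtrancl_adj_sym)
  show False
  proof (rule edge_minimizing_no_shorter_exchange[OF min sub, of "{#}"])
    show "\<forall>a b. Upair a b \<in># {#Upair u v, Upair u v#} \<longrightarrow> (a, b) \<in> (adj (R + ?S'))\<^sup>*"
      using uv vu by auto
  qed (auto simp: verts_def edge_weight_def)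
qed

lemma metric_instance_edge:
  "metric_instance V E \<omega> \<Longrightarrow> u \<in> V \<Longrightarrow> v \<in> V \<Longrightarrow> u \<noteq> v \<Longrightarrow> Upair u v \<in># E"
  by (simp add: metric_instance_def)

lemma metric_instance_triangle:
  "metric_instance V E \<omega> \<Longrightarrow> u \<in> V \<Longrightarrow> v \<in> V \<Longrightarrow> w \<in> V \<Longrightarrow>
    u \<noteq> v \<Longrightarrow> v \<noteq> w \<Longrightarrow> u \<noteq> w \<Longrightarrow> \<omega> (Upair u w) \<le> \<omega> (Upair u v) + \<omega> (Upair v w)"
  by (simp add: metric_instance_def)

lemma edge_minimizing_no_shortcut_in_component:
  assumes min: "edge_minimizing E R \<omega> S"
    and metric: "metric_instance V E \<omega>"
    and verts_S: "verts S \<subseteq> V"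
    and path: "(u, v) \<in> (adj R)\<^sup>*"
    and distinct: "u \<noteq> v" "u \<noteq> w" "v \<noteq> w"
  shows "\<not> {#Upair u v, Upair u w#} \<subseteq># S"
proof
  assume sub: "{#Upair u v, Upair u w#} \<subseteq># S"
  let ?S' = "S - {#Upair u v, Upair u w#} + {#Upair v w#}"
  have "Upair u v \<in># S" "Upair u w \<in># S"
    using sub by (auto dest: mset_subset_eqD)
  then have verts_uvw: "u \<in> verts S" "v \<in> verts S" "w \<in> verts S"
    by (auto intro: Upair_in_verts)
  then have "u \<in> V" "v \<in> V" "w \<in> V"
    using verts_S by auto
  then have "Upair v w \<in># E"
    and "\<omega> (Upair v w) \<le> \<omega> (Upair v u) + \<omega> (Upair u w)"
    using metric_instance_edge[OF metric] metric_instance_triangle[OF metric] distinct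
    by auto
  then have triangle: "\<omega> (Upair v w) \<le> \<omega> (Upair u v) + \<omega> (Upair u w)"
    by (simp add: Upair_commute)
  have uv: "(u, v) \<in> (adj (R + ?S'))\<^sup>*"
    using path rtrancl_adj_mono[of R "R + ?S'"] by auto
  moreover have "(v, w) \<in> adj (R + ?S')"
    by (simp add: adj_def)
  ultimately have uw: "(u, w) \<in> (adj (R + ?S'))\<^sup>*"
    by (rule rtrancl_into_rtrancl)
  have vu: "(v, u) \<in> (adj (R + ?S'))\<^sup>*" and wu: "(w, u) \<in> (adj (R + ?S'))\<^sup>*"
    using uv uw by (simp_all add: rtrancl_adj_sym)
  show False
  proof (rule edge_minimizing_no_shorter_exchange[OF min sub])
    show "set_mset {#Upair v w#} \<subseteq> set_mset E"
      using \<open>Upair v w \<in># E\<close> by simp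
    show "size {#Upair v w#} < size {#Upair u v, Upair u w#}"
      by simp
    show "edge_weight \<omega> {#Upair v w#} \<le> edge_weight \<omega> {#Upair u v, Upair u w#}"
      using triangle by (simp add: edge_weight_def)
    show "\<forall>x. even (deg ({#Upair u v, Upair u w#} + {#Upair v w#}) x)"
    proof
      fix x
      show "even (deg ({#Upair u v, Upair u w#} + {#Upair v w#}) x)"
        using distinct by (cases "x = u"; cases "x = v"; cases "x = w") simp_all
    qed
    show "verts {#Upair v w#} \<subseteq> verts (R + S)"
      using verts_uvw by (simp add: verts_def)
    show "\<forall>a b. Upair a b \<in># {#Upair u v, Upair u w#} \<longrightarrow> (a, b) \<in> (adj (R + ?S'))\<^sup>*"
      using uv uw vu wu by auto
  qed
qed

lemma eulerian_extension_second_edge_at_balanced: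
  assumes "eulerian (R + S)" "u \<in> verts R" "balanced R u"
    and "Upair u v \<in># S" "u \<noteq> v"
  obtains w where "w \<noteq> u" "{#Upair u v, Upair u w#} \<subseteq># S"
proof -
  have "even (deg S u)"
    using assms(1-3) by (auto simp: eulerian_def balanced_def)
  moreover have "deg S u = deg (S - {#Upair u v#}) u + 1"
    using deg_add_mset[of "Upair u v" "S - {#Upair u v#}" u] \<open>u \<noteq> v\<close>
    by (simp add: insert_DiffM[OF \<open>Upair u v \<in># S\<close>])
  ultimately obtain w where "w \<noteq> u" "Upair u w \<in># S - {#Upair u v#}"
    using odd_deg_imp_edge[of "S - {#Upair u v#}" u] by auto
  then show ?thesis
    using that \<open>Upair u v \<in># S\<close> by (simp add: insert_subset_eq_iff)
qed

theorem mainTheorem5: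
  fixes V :: "'v set" and E R S :: "'v uprod multiset" and \<omega> :: "'v uprod \<Rightarrow> nat"
  assumes "rpp_instance V E R"
    and "metric_instance V E \<omega>"
    and "edge_minimizing E R \<omega> S"
  shows "\<not> (\<exists>u v. Upair u v \<in># S \<and> same_comp R u v \<and> balanced R u)"
proof clarify
  fix u v assume uv: "Upair u v \<in># S" and "same_comp R u v" and "balanced R u"
  then have path: "(u, v) \<in> (adj R)\<^sup>*" and "u \<in> verts R"
    by (auto simp: same_comp_def)
  have "set_mset S \<subseteq> set_mset E" and "eulerian (R + S)"
    using assms(3) by (auto simp: edge_minimizing_def eulerian_extension_def)
  then have verts_S: "verts S \<subseteq> V"
    using assms(1) by (auto simp: rpp_instance_def verts_def)
  have "u \<noteq> v"
    using uv edge_minimizing_no_loop[OF assms(3)] by auto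
  with \<open>eulerian (R + S)\<close> \<open>u \<in> verts R\<close> \<open>balanced R u\<close> uv
  obtain w where "w \<noteq> u" and sub: "{#Upair u v, Upair u w#} \<subseteq># S"
    by (rule eulerian_extension_second_edge_at_balanced)
  show False
  proof (cases "w = v")
    case True
    then show False
      using sub edge_minimizing_no_double_edge_in_component[OF assms(3) path] by simp
  next
    case False
    then show False
      using sub edge_minimizing_no_shortcut_in_component[OF assms(3,2) verts_S path]
        \<open>u \<noteq> v\<close> \<open>w \<noteq> u\<close> by auto
  qed
qed

end
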